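(* Let $G$ be a countable group and $H$ a subgroup of finite index in $G$. If $H$ is algebraically recurrent, then $G$ is algebraically recurrent. Moreover, if every symmetric, non-degenerate, Liouville random walk on $H$ is algebraically recurrent, then every symmetric, non-degenerate, Liouville random walk on $G$ is algebraically recurrent.
   Context: For a countable group $\Gamma$ and a probability measure $\mu$ on $\Gamma$, a $\mu$-random walk is $X_n=\zeta_1\cdots\zeta_n$ with $\zeta_i$ i.i.d. of law $\mu$; $\mathcal{S}_n$ denotes the semigroup generated by $\{X_n,X_{n+1},\ldots\}$. $(\Gamma,\mu)$ is algebraically recurrent (AR) if for every $n$, $\mathcal{S}_n=\Gamma$ almost surely; $\Gamma$ is AR if $(\Gamma,\mu)$ is AR for every symmetric probability measure $\mu$ (i.e. $\mu(g)=\mu(g^{-1})$) whose support generates $\Gamma$ as a group. A random walk is symmetric if $\mu$ is symmetric, non-degenerate if the support of $\mu$ generates $\Gamma$ as a group, and Liouville if every bounded $\mu$-harmonic function is constant. *)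

theory Defs
  imports "HOL-Probability.Probability" "HOL-Algebra.Algebra"
begin

inductive_set gen_semigroup :: "('a, 'b) monoid_scheme \<Rightarrow> 'a set \<Rightarrow> 'a set"
  for G and A where
    gs_incl: "a \<in> A \<Longrightarrow> a \<in> gen_semigroup G A"
  | gs_mult: "x \<in> gen_semigroup G A \<Longrightarrow> y \<in> gen_semigroup G A
               \<Longrightarrow> x \<otimes>\<^bsub>G\<^esub> y \<in> gen_semigroup G A"

text \<open>Position n of the random walk driven by increments omega = (zeta_1, zeta_2, ...):
  X_n = zeta_1 * ... * zeta_n (X_0 is the identity).\<close>
definition rw_pos :: "('a, 'b) monoid_scheme \<Rightarrow> nat \<Rightarrow> 'a stream \<Rightarrow> 'a" where
  "rw_pos G n \<omega> = foldr (\<lambda>x y. x \<otimes>\<^bsub>G\<^esub> y) (stake n \<omega>) \<one>\<^bsub>G\<^esub>"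

definition tail_semigroup :: "('a, 'b) monoid_scheme \<Rightarrow> nat \<Rightarrow> 'a stream \<Rightarrow> 'a set" where
  "tail_semigroup G n \<omega> = gen_semigroup G {rw_pos G m \<omega> | m. n \<le> m}"

definition alg_recurrent :: "('a, 'b) monoid_scheme \<Rightarrow> 'a pmf \<Rightarrow> bool" where
  "alg_recurrent G \<mu> \<longleftrightarrow>
     (\<forall>n. AE \<omega> in stream_space (measure_pmf \<mu>). tail_semigroup G n \<omega> = carrier G)"

definition symmetric_measure :: "('a, 'b) monoid_scheme \<Rightarrow> 'a pmf \<Rightarrow> bool" where
  "symmetric_measure G \<mu> \<longleftrightarrow> (\<forall>g\<in>carrier G. pmf \<mu> g = pmf \<mu> (inv\<^bsub>G\<^esub> g))"

definition non_degenerate :: "('a, 'b) monoid_scheme \<Rightarrow> 'a pmf \<Rightarrow> bool" where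
  "non_degenerate G \<mu> \<longleftrightarrow> generate G (set_pmf \<mu>) = carrier G"

definition harmonic :: "('a, 'b) monoid_scheme \<Rightarrow> 'a pmf \<Rightarrow> ('a \<Rightarrow> real) \<Rightarrow> bool" where
  "harmonic G \<mu> f \<longleftrightarrow>
     (\<forall>g\<in>carrier G. integrable (measure_pmf \<mu>) (\<lambda>h. f (g \<otimes>\<^bsub>G\<^esub> h)) \<and>
        f g = measure_pmf.expectation \<mu> (\<lambda>h. f (g \<otimes>\<^bsub>G\<^esub> h)))"

definition liouville :: "('a, 'b) monoid_scheme \<Rightarrow> 'a pmf \<Rightarrow> bool" where
  "liouville G \<mu> \<longleftrightarrow>
     (\<forall>f. harmonic G \<mu> f \<and> (\<exists>B. \<forall>g\<in>carrier G. \<bar>f g\<bar> \<le> B)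
          \<longrightarrow> (\<forall>g\<in>carrier G. \<forall>h\<in>carrier G. f g = f h))"

definition measure_on :: "('a, 'b) monoid_scheme \<Rightarrow> 'a pmf \<Rightarrow> bool" where
  "measure_on G \<mu> \<longleftrightarrow> set_pmf \<mu> \<subseteq> carrier G"

definition AR_group :: "('a, 'b) monoid_scheme \<Rightarrow> bool" where
  "AR_group G \<longleftrightarrow>
     (\<forall>\<mu>. measure_on G \<mu> \<and> symmetric_measure G \<mu> \<and> non_degenerate G \<mu>
          \<longrightarrow> alg_recurrent G \<mu>)"

definition liouville_AR_group :: "('a, 'b) monoid_scheme \<Rightarrow> bool" where
  "liouville_AR_group G \<longleftrightarrow>
     (\<forall>\<mu>. measure_on G \<mu> \<and> symmetric_measure G \<mu> \<and> non_degenerate G \<mu> \<and> liouville G \<mu>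
          \<longrightarrow> alg_recurrent G \<mu>)"

end

theory Submission
  imports Defs
begin

text \<open>Fix a symmetric non-degenerate step law \<open>\<mu>\<close> on \<open>G\<close>. Almost every path of the walk contains
  every finite word of steps infinitely often, and since \<open>H\<close> has finite index a single word leads every
  starting point into any prescribed coset \<open>H g\<close>; so the walk returns to \<open>H\<close> and visits every coset
  infinitely often. Observing the walk at its successive returns to \<open>H\<close> gives a random walk on \<open>H\<close>
  whose step law \<open>\<mu>\<^sub>H\<close> is the law of the first return point. Reversing and inverting an
  excursion from \<open>H\<close> to \<open>H\<close> is again an excursion of the same probability, so \<open>\<mu>\<^sub>H\<close> is
  symmetric; cutting a word at its returns to \<open>H\<close> shows that it is non-degenerate; and a bounded
  \<open>\<mu>\<^sub>H\<close>-harmonic function \<open>f\<close> on \<open>H\<close> extends to the bounded \<open>\<mu>\<close>-harmonic function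
  \<open>g \<mapsto> E f(g X\<^sub>\<tau>)\<close>, \<open>\<tau>\<close> the hitting time of \<open>H\<close>, so \<open>\<mu>\<^sub>H\<close> is Liouville when \<open>\<mu>\<close> is.
  If \<open>\<mu>\<^sub>H\<close> is algebraically recurrent, the tail semigroup \<open>S\<^sub>n\<close> of the original walk contains
  \<open>H\<close>, and a visit \<open>X\<^sub>k = h g\<close> with \<open>k \<ge> n\<close> gives \<open>g = h\<^sup>-\<^sup>1 X\<^sub>k \<in> S\<^sub>n\<close>.\<close>

section \<open>Streams of independent samples of a pmf\<close>

lemma (in prob_space) integral_stream_space:
  fixes f :: "'a stream \<Rightarrow> 'b::{banach, second_countable_topology}"
  assumes f: "integrable (stream_space M) f"
  shows "(\<integral>\<omega>. f \<omega> \<partial>stream_space M) = (\<integral>x. (\<integral>\<omega>. f (x ## \<omega>) \<partial>stream_space M) \<partial>M)"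
proof -
  interpret S: sequence_space M ..
  interpret P: pair_sigma_finite M "\<Pi>\<^sub>M i::nat\<in>UNIV. M" ..
  have [measurable]: "f \<in> borel_measurable (stream_space M)" using f by auto
  have int_S: "integrable S.S (\<lambda>\<omega>. f (to_stream \<omega>))"
    using f by (subst (asm) stream_space_eq_distr) (simp add: integrable_distr_eq)
  have int_P: "integrable (M \<Otimes>\<^sub>M S.S) (\<lambda>(s, \<omega>). f (to_stream (case_nat s \<omega>)))"
    using int_S by (subst (asm) S.PiM_iter[symmetric]) (simp add: integrable_distr_eq split_beta')
  have "(\<integral>\<omega>. f \<omega> \<partial>stream_space M) = (\<integral>\<omega>. f (to_stream \<omega>) \<partial>S.S)"
    by (subst stream_space_eq_distr) (simp add: integral_distr)
  also have "\<dots> = (\<integral>z. f (to_stream ((\<lambda>(s, \<omega>). case_nat s \<omega>) z)) \<partial>(M \<Otimes>\<^sub>M S.S))"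
    by (subst S.PiM_iter[symmetric]) (simp add: integral_distr)
  also have "\<dots> = (\<integral>x. \<integral>\<omega>. f (to_stream (case_nat x \<omega>)) \<partial>S.S \<partial>M)"
    using P.integral_fst'[OF int_P] by (simp add: split_beta')
  also have "\<dots> = (\<integral>x. \<integral>\<omega>. f (x ## \<omega>) \<partial>stream_space M \<partial>M)"
    by (subst stream_space_eq_distr)
      (simp add: integral_distr to_stream_nat_case cong: Bochner_Integration.integral_cong)
  finally show ?thesis .
qed

lemma stake_eq_iff_snth: "stake n \<omega> = v \<longleftrightarrow> length v = n \<and> (\<forall>i<n. \<omega> !! i = v ! i)"
  by (auto simp: list_eq_iff_nth_eq)

lemma stake_in_lists: "\<omega> \<in> streams A \<Longrightarrow> stake n \<omega> \<in> lists A"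
  by (auto simp: streams_iff_snth in_set_conv_nth)

lemma sdrop_in_streams: "\<omega> \<in> streams A \<Longrightarrow> sdrop n \<omega> \<in> streams A"
  by (auto simp: streams_iff_snth sdrop_snth)

definition word_recurrent :: "'a set \<Rightarrow> 'a stream \<Rightarrow> bool" where
  "word_recurrent A \<omega> \<longleftrightarrow>
     \<omega> \<in> streams A \<and> (\<forall>w\<in>lists A. \<forall>n. \<exists>k\<ge>n. stake (length w) (sdrop k \<omega>) = w)"

lemma word_recurrent_sdrop: "word_recurrent A \<omega> \<Longrightarrow> word_recurrent A (sdrop j \<omega>)"
  unfolding word_recurrent_def
proof (intro conjI ballI allI; elim conjE)
  fix w n assume occ: "\<forall>w\<in>lists A. \<forall>n. \<exists>k\<ge>n. stake (length w) (sdrop k \<omega>) = w" and w: "w \<in> lists A"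
  then obtain k where "k \<ge> n + j" "stake (length w) (sdrop k \<omega>) = w" by blast
  then show "\<exists>k\<ge>n. stake (length w) (sdrop k (sdrop j \<omega>)) = w"
    by (intro exI[of _ "k - j"]) auto
qed (rule sdrop_in_streams)

lemma word_recurrent_Stream:
  assumes "word_recurrent A \<omega>" "a \<in> A" shows "word_recurrent A (a ## \<omega>)"
  unfolding word_recurrent_def
proof (intro conjI ballI allI)
  show "a ## \<omega> \<in> streams A" using assms by (simp add: word_recurrent_def)
  fix w n assume "w \<in> lists A"
  then obtain k where "k \<ge> n" "stake (length w) (sdrop k \<omega>) = w"
    using assms(1) unfolding word_recurrent_def by blast
  then show "\<exists>k\<ge>n. stake (length w) (sdrop k (a ## \<omega>)) = w"
    by (intro exI[of _ "Suc k"]) auto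
qed

context
  fixes p :: "'a pmf"
begin

lemma sets_stream_space_pmf: "sets (stream_space (measure_pmf p)) = sets (stream_space (count_space UNIV))"
  by (rule sets_stream_space_cong) simp

lemma space_stream_space_pmf[simp]: "space (stream_space (measure_pmf p)) = UNIV"
  by (simp add: space_stream_space)

lemma UNIV_in_sets_stream_space_pmf: "UNIV \<in> sets (stream_space (measure_pmf p))"
  using sets.top[of "stream_space (measure_pmf p)"] by simp

lemma prob_space_stream_space_pmf: "prob_space (stream_space (measure_pmf p))"
  by (rule prob_space.prob_space_stream_space) (rule prob_space_measure_pmf)

lemma measure_stream_space_pmf_UNIV[simp]: "measure (stream_space (measure_pmf p)) UNIV = 1"
  using prob_space.prob_space[OF prob_space_stream_space_pmf] by simp

lemma sets_stake_eq: "{\<omega>. stake n \<omega> = v} \<in> sets (stream_space (measure_pmf p))"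
proof -
  have "{\<omega>. stake n \<omega> = v} = {\<omega>\<in>space (stream_space (count_space UNIV)).
      length v = n \<and> (\<forall>i<n. \<omega> !! i = v ! i)}"
    by (auto simp: stake_eq_iff_snth space_stream_space)
  also have "\<dots> \<in> sets (stream_space (count_space UNIV))" by measurable
  finally show ?thesis by (simp add: sets_stream_space_pmf)
qed

lemma sets_sdrop_vimage:
  "B \<in> sets (stream_space (measure_pmf p)) \<Longrightarrow> {\<omega>. sdrop k \<omega> \<in> B} \<in> sets (stream_space (measure_pmf p))"
  using measurable_sets[OF measurable_sdrop[of k "measure_pmf p"], of B] by (simp add: vimage_def)

lemma sets_stake_sdrop:
  "B \<in> sets (stream_space (measure_pmf p)) \<Longrightarrow>
    {\<omega>. stake n \<omega> = v \<and> sdrop n \<omega> \<in> B} \<in> sets (stream_space (measure_pmf p))"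
  unfolding Collect_conj_eq by (intro sets.Int sets_stake_eq sets_sdrop_vimage)

lemma sets_stake_pred:
  "streams (set_pmf p) \<inter> {\<omega>. P (stake m \<omega>)} \<in> sets (stream_space (measure_pmf p))"
proof -
  have "streams (set_pmf p) \<inter> {\<omega>. P (stake m \<omega>)}
      = (\<Union>v\<in>{v\<in>lists (set_pmf p). P v}. streams (set_pmf p) \<inter> {\<omega>. stake m \<omega> = v})"
    by (auto dest: stake_in_lists[where n=m])
  also have "\<dots> \<in> sets (stream_space (measure_pmf p))"
    using streams_sets[of "set_pmf p" "measure_pmf p"]
    by (intro sets.countable_UN') (auto intro: sets.Int sets_stake_eq countable_subset[OF _ countable_lists[OF countable_set_pmf]])
  finally show ?thesis .
qed

lemma sets_word_recurrent: "{\<omega>. word_recurrent (set_pmf p) \<omega>} \<in> sets (stream_space (measure_pmf p))"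
proof -
  have "{\<omega>. word_recurrent (set_pmf p) \<omega>} = streams (set_pmf p) \<inter>
      (\<Inter>w\<in>lists (set_pmf p). \<Inter>n. \<Union>k\<in>{k. n \<le> k}. {\<omega>. sdrop k \<omega> \<in> {x. stake (length w) x = w}})"
    unfolding word_recurrent_def by blast
  also have "\<dots> \<in> sets (stream_space (measure_pmf p))"
    using streams_sets[of "set_pmf p" "measure_pmf p"]
    by (intro sets.Int sets.countable_INT' sets.countable_UN' countable_lists countable_set_pmf
        image_subsetI sets_sdrop_vimage sets_stake_eq) auto
  finally show ?thesis .
qed

lemma AE_streams_set_pmf: "AE \<omega> in stream_space (measure_pmf p). \<omega> \<in> streams (set_pmf p)"
proof -
  have "AE \<omega> in stream_space (measure_pmf p). stream_all (\<lambda>x. x \<in> set_pmf p) \<omega>"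
    by (rule prob_space.AE_stream_all[OF prob_space_measure_pmf]) (auto simp: AE_measure_pmf_iff)
  then show ?thesis by (simp add: streams_iff_sset subset_eq)
qed

lemma emeasure_stake_sdrop:
  assumes B: "B \<in> sets (stream_space (measure_pmf p))"
  shows "emeasure (stream_space (measure_pmf p)) {\<omega>. stake (length w) \<omega> = w \<and> sdrop (length w) \<omega> \<in> B}
       = ennreal (prod_list (map (pmf p) w)) * emeasure (stream_space (measure_pmf p)) B"
proof (induction w)
  case (Cons a w)
  let ?S = "stream_space (measure_pmf p)"
  have "emeasure ?S {\<omega>. stake (length (a # w)) \<omega> = a # w \<and> sdrop (length (a # w)) \<omega> \<in> B}
     = (\<integral>\<^sup>+t. emeasure ?S {\<omega>. stake (length w) \<omega> = w \<and> sdrop (length w) \<omega> \<in> B} * indicator {a} t \<partial>p)"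
    by (subst prob_space.emeasure_stream_space[OF prob_space_measure_pmf sets_stake_sdrop[OF B]])
      (intro nn_integral_cong, auto split: split_indicator)
  also have "\<dots> = emeasure ?S {\<omega>. stake (length w) \<omega> = w \<and> sdrop (length w) \<omega> \<in> B} * pmf p a"
    by (simp add: nn_integral_cmult_indicator emeasure_pmf_single)
  also have "\<dots> = ennreal (pmf p a) * ennreal (prod_list (map (pmf p) w)) * emeasure ?S B"
    using Cons by (simp add: mult_ac)
  finally show ?case by (simp add: ennreal_mult' prod_list_nonneg)
qed simp

lemma emeasure_sdrop_vimage:
  assumes B: "B \<in> sets (stream_space (measure_pmf p))"
  shows "emeasure (stream_space (measure_pmf p)) {\<omega>. sdrop k \<omega> \<in> B} = emeasure (stream_space (measure_pmf p)) B"
proof (induction k)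
  case (Suc k)
  then show ?case
    by (subst prob_space.emeasure_stream_space[OF prob_space_measure_pmf sets_sdrop_vimage[OF B]])
      (simp add: measure_pmf.emeasure_space_1)
qed simp

lemma prod_list_pmf_nonneg: "0 \<le> prod_list (map (pmf p) w)"
  by (induction w) auto

lemma prod_list_pmf_le_1: "prod_list (map (pmf p) w) \<le> 1"
  by (induction w) (auto intro!: mult_le_one pmf_le_1 prod_list_pmf_nonneg)

lemma prod_list_pmf_pos: "w \<in> lists (set_pmf p) \<Longrightarrow> 0 < prod_list (map (pmf p) w)"
  by (induction w) (auto simp: pmf_positive)

lemma sets_word_absent_in_blocks:
  "{\<omega>. \<forall>j<J. stake (length w) (sdrop (j * length w) \<omega>) \<noteq> w} \<in> sets (stream_space (measure_pmf p))"
proof -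
  have "{\<omega>. \<forall>j<J. stake (length w) (sdrop (j * length w) \<omega>) \<noteq> w}
      = {\<omega>\<in>space (stream_space (count_space UNIV)). \<forall>j<J. \<not> (\<forall>i<length w. \<omega> !! (j * length w + i) = w ! i)}"
    by (auto simp: stake_eq_iff_snth space_stream_space sdrop_snth)
  also have "\<dots> \<in> sets (stream_space (count_space UNIV))" by measurable
  finally show ?thesis by (simp add: sets_stream_space_pmf)
qed

lemma measure_word_absent_in_blocks:
  "measure (stream_space (measure_pmf p)) {\<omega>. \<forall>j<J. stake (length w) (sdrop (j * length w) \<omega>) \<noteq> w}
     = (1 - prod_list (map (pmf p) w)) ^ J"
proof (induction J)
  case 0
  show ?case by simp
next
  case (Suc J)
  let ?S = "stream_space (measure_pmf p)" and ?L = "length w"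
  interpret S: prob_space ?S by (rule prob_space_stream_space_pmf)
  define E where "E = {\<omega>. \<forall>j<J. stake ?L (sdrop (j * ?L) \<omega>) \<noteq> w}"
  have E: "E \<in> sets ?S" unfolding E_def by (rule sets_word_absent_in_blocks)
  have split: "{\<omega>. \<forall>j<Suc J. stake ?L (sdrop (j * ?L) \<omega>) \<noteq> w}
      = {\<omega>. sdrop ?L \<omega> \<in> E} - {\<omega>. stake ?L \<omega> = w \<and> sdrop ?L \<omega> \<in> E}"
    by (auto simp: E_def All_less_Suc2 add.commute)
  have "measure ?S {\<omega>. \<forall>j<Suc J. stake ?L (sdrop (j * ?L) \<omega>) \<noteq> w}
      = measure ?S {\<omega>. sdrop ?L \<omega> \<in> E} - measure ?S {\<omega>. stake ?L \<omega> = w \<and> sdrop ?L \<omega> \<in> E}"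
    unfolding split by (rule S.finite_measure_Diff) (use E in \<open>auto intro: sets_sdrop_vimage sets_stake_sdrop\<close>)
  also have "\<dots> = (1 - prod_list (map (pmf p) w)) * measure ?S E"
  proof -
    have "ennreal (measure ?S {\<omega>. stake ?L \<omega> = w \<and> sdrop ?L \<omega> \<in> E})
        = ennreal (prod_list (map (pmf p) w) * measure ?S E)"
      using emeasure_stake_sdrop[OF E, of w]
      by (simp add: S.emeasure_eq_measure ennreal_mult[OF prod_list_pmf_nonneg measure_nonneg])
    then have "measure ?S {\<omega>. stake ?L \<omega> = w \<and> sdrop ?L \<omega> \<in> E} = prod_list (map (pmf p) w) * measure ?S E"
      by (simp add: prod_list_pmf_nonneg)
    then show ?thesis
      using emeasure_sdrop_vimage[OF E, of ?L] by (simp add: S.emeasure_eq_measure algebra_simps)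
  qed
  finally show ?case by (simp add: Suc E_def)
qed

lemma AE_word_occurs:
  assumes w: "w \<in> lists (set_pmf p)"
  shows "AE \<omega> in stream_space (measure_pmf p). \<exists>k\<ge>n. stake (length w) (sdrop k \<omega>) = w"
proof -
  let ?S = "stream_space (measure_pmf p)" and ?L = "length w"
  interpret S: prob_space ?S by (rule prob_space_stream_space_pmf)
  define absent where "absent = (\<Inter>J. {\<omega>. \<forall>j<J. stake ?L (sdrop (j * ?L) \<omega>) \<noteq> w})"
  have absent_sets: "absent \<in> sets ?S"
    unfolding absent_def using sets_word_absent_in_blocks by auto
  have "measure ?S absent = 0"
  proof (rule ccontr)
    assume "measure ?S absent \<noteq> 0"
    then have pos: "measure ?S absent > 0" using measure_nonneg[of ?S absent] by linarith
    have "0 < prod_list (map (pmf p) w)" "prod_list (map (pmf p) w) \<le> 1"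
      using prod_list_pmf_pos[OF w] prod_list_pmf_le_1 by auto
    then obtain J where J: "(1 - prod_list (map (pmf p) w)) ^ J < measure ?S absent"
      using real_arch_pow_inv[OF pos, of "1 - prod_list (map (pmf p) w)"] by auto
    have "measure ?S absent \<le> measure ?S {\<omega>. \<forall>j<J. stake ?L (sdrop (j * ?L) \<omega>) \<noteq> w}"
      by (intro S.finite_measure_mono sets_word_absent_in_blocks) (auto simp: absent_def)
    then show False using J by (simp add: measure_word_absent_in_blocks)
  qed
  then have "{\<omega>. sdrop n \<omega> \<in> absent} \<in> null_sets ?S"
    using emeasure_sdrop_vimage[OF absent_sets, of n] sets_sdrop_vimage[OF absent_sets, of n]
    by (auto simp: null_sets_def S.emeasure_eq_measure)
  moreover have "{\<omega> \<in> space ?S. \<not> (\<exists>k\<ge>n. stake ?L (sdrop k \<omega>) = w)} \<subseteq> {\<omega>. sdrop n \<omega> \<in> absent}"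
    by (auto simp: absent_def add.commute)
  ultimately show ?thesis by (rule AE_I')
qed

lemma AE_word_recurrent: "AE \<omega> in stream_space (measure_pmf p). word_recurrent (set_pmf p) \<omega>"
proof -
  have "AE \<omega> in stream_space (measure_pmf p).
      \<forall>w\<in>lists (set_pmf p). \<forall>n. \<exists>k\<ge>n. stake (length w) (sdrop k \<omega>) = w"
    by (subst AE_ball_countable) (auto simp: AE_all_countable intro!: AE_word_occurs
        countable_lists countable_set_pmf)
  with AE_streams_set_pmf show ?thesis by eventually_elim (simp add: word_recurrent_def)
qed

end

definition word_prod :: "('a, 'b) monoid_scheme \<Rightarrow> 'a list \<Rightarrow> 'a" where
  "word_prod G w = foldr (\<lambda>x y. x \<otimes>\<^bsub>G\<^esub> y) w \<one>\<^bsub>G\<^esub>"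

lemma rw_pos_eq_word_prod: "rw_pos G n \<omega> = word_prod G (stake n \<omega>)"
  by (simp add: rw_pos_def word_prod_def)

lemma rw_pos_carrier_update: "rw_pos (G\<lparr>carrier := K\<rparr>) = rw_pos G"
  by (simp add: rw_pos_def fun_eq_iff)

lemma gen_semigroup_mono: "A \<subseteq> B \<Longrightarrow> gen_semigroup G A \<subseteq> gen_semigroup G B"
proof
  fix x assume "A \<subseteq> B" "x \<in> gen_semigroup G A"
  then show "x \<in> gen_semigroup G B"
    by (induction rule: gen_semigroup.induct[OF \<open>x \<in> gen_semigroup G A\<close>]) (auto intro: gen_semigroup.intros)
qed

lemma gen_semigroup_carrier_update: "gen_semigroup (G\<lparr>carrier := K\<rparr>) A = gen_semigroup G A"
proof (intro equalityI subsetI)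
  fix x assume "x \<in> gen_semigroup (G\<lparr>carrier := K\<rparr>) A"
  then show "x \<in> gen_semigroup G A" by induction (auto intro: gen_semigroup.intros)
next
  fix x assume "x \<in> gen_semigroup G A"
  then show "x \<in> gen_semigroup (G\<lparr>carrier := K\<rparr>) A"
    by induction (auto intro: gen_semigroup.gs_incl gen_semigroup.gs_mult[of _ "G\<lparr>carrier := K\<rparr>", simplified])
qed

lemma tail_semigroup_carrier_update: "tail_semigroup (G\<lparr>carrier := K\<rparr>) n \<omega> = tail_semigroup G n \<omega>"
  by (simp add: tail_semigroup_def rw_pos_carrier_update gen_semigroup_carrier_update)

context monoid
begin

lemma word_prod_Nil[simp]: "word_prod G [] = \<one>"
  and word_prod_Cons[simp]: "word_prod G (a # w) = a \<otimes> word_prod G w"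
  by (simp_all add: word_prod_def)

lemma word_prod_closed[intro, simp]: "set w \<subseteq> carrier G \<Longrightarrow> word_prod G w \<in> carrier G"
  by (induction w) auto

lemma word_prod_append:
  "set v \<subseteq> carrier G \<Longrightarrow> set w \<subseteq> carrier G \<Longrightarrow> word_prod G (v @ w) = word_prod G v \<otimes> word_prod G w"
  by (induction v) (auto simp: m_assoc)

lemma word_prod_take_drop:
  "set w \<subseteq> carrier G \<Longrightarrow> word_prod G w = word_prod G (take j w) \<otimes> word_prod G (drop j w)"
  by (metis append_take_drop_id word_prod_append set_take_subset set_drop_subset order_trans)

lemma rw_pos_closed: "\<omega> \<in> streams (carrier G) \<Longrightarrow> rw_pos G n \<omega> \<in> carrier G"
  using stake_in_lists[of \<omega> "carrier G" n] by (auto simp: rw_pos_eq_word_prod intro!: word_prod_closed)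

lemma rw_pos_add:
  "\<omega> \<in> streams (carrier G) \<Longrightarrow> rw_pos G (m + n) \<omega> = rw_pos G m \<omega> \<otimes> rw_pos G n (sdrop m \<omega>)"
  unfolding rw_pos_eq_word_prod stake_add[symmetric, where m=m and s=\<omega> and n=n]
  by (intro word_prod_append) (auto dest: stake_in_lists sdrop_in_streams)

lemma rw_pos_0[simp]: "rw_pos G 0 \<omega> = \<one>"
  by (simp add: rw_pos_eq_word_prod)

lemma rw_pos_Stream: "rw_pos G (Suc m) (a ## \<omega>) = a \<otimes> rw_pos G m \<omega>"
  by (simp add: rw_pos_eq_word_prod)

lemma gen_semigroup_closed: "A \<subseteq> carrier G \<Longrightarrow> gen_semigroup G A \<subseteq> carrier G"
proof
  fix x assume "A \<subseteq> carrier G" "x \<in> gen_semigroup G A"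
  then show "x \<in> carrier G" by (induction rule: gen_semigroup.induct[OF \<open>x \<in> gen_semigroup G A\<close>]) auto
qed

end

context group
begin

lemma word_prod_rev_inv:
  "set w \<subseteq> carrier G \<Longrightarrow> word_prod G (rev (map (\<lambda>x. inv x) w)) = inv (word_prod G w)"
  by (induction w) (auto simp: word_prod_append inv_mult_group subset_eq)

lemma generate_imp_word_prod:
  assumes "A \<subseteq> carrier G" "\<And>a. a \<in> A \<Longrightarrow> inv a \<in> A" "g \<in> generate G A"
  shows "\<exists>w\<in>lists A. word_prod G w = g"
  using assms(3)
proof induction
  case one show ?case by (intro bexI[of _ "[]"]) auto
next
  case (incl h) then show ?case using assms(1) by (intro bexI[of _ "[h]"]) auto
next
  case (inv h) then show ?case using assms by (intro bexI[of _ "[inv h]"]) auto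
next
  case (eng a b)
  then obtain v w where "v \<in> lists A" "w \<in> lists A" "word_prod G v = a" "word_prod G w = b" by blast
  then show ?case using assms(1) by (intro bexI[of _ "v @ w"]) (auto intro!: word_prod_append)
qed

end

section \<open>Visiting the cosets of a finite-index subgroup\<close>

locale finite_index_random_walk = group +
  fixes H :: "'a set" and \<mu> :: "'a pmf"
  assumes countable_carrier: "countable (carrier G)"
    and subgroup_H: "subgroup H G"
    and finite_index: "finite (rcosets H)"
    and support_subset: "set_pmf \<mu> \<subseteq> carrier G"
    and symmetric: "\<And>g. g \<in> carrier G \<Longrightarrow> pmf \<mu> g = pmf \<mu> (inv g)"
    and generates: "generate G (set_pmf \<mu>) = carrier G"
begin

abbreviation paths :: "'a stream measure" where
  "paths \<equiv> stream_space (measure_pmf \<mu>)"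

abbreviation typical :: "'a stream \<Rightarrow> bool" where
  "typical \<equiv> word_recurrent (set_pmf \<mu>)"

lemma H_subset: "H \<subseteq> carrier G"
  using subgroup_H by (rule subgroup.subset)

lemma support_closed: "x \<in> set_pmf \<mu> \<Longrightarrow> x \<in> carrier G"
  using support_subset by auto

lemma words_closed: "w \<in> lists (set_pmf \<mu>) \<Longrightarrow> set w \<subseteq> carrier G"
  using support_subset by auto

lemma inv_in_support: "x \<in> set_pmf \<mu> \<Longrightarrow> inv x \<in> set_pmf \<mu>"
  using symmetric[of x] support_closed[of x] by (simp add: set_pmf_iff)

lemma exists_word: "g \<in> carrier G \<Longrightarrow> \<exists>w\<in>lists (set_pmf \<mu>). word_prod G w = g"
  using generate_imp_word_prod[OF support_subset inv_in_support] generates by blast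

lemma typical_streams_carrier: "typical \<omega> \<Longrightarrow> \<omega> \<in> streams (carrier G)"
  using streams_mono support_subset by (auto simp: word_recurrent_def)

lemma exists_word_through_cosets:
  assumes g: "g \<in> carrier G" and D: "finite D" "D \<subseteq> rcosets H"
  shows "\<exists>W\<in>lists (set_pmf \<mu>). \<forall>c\<in>D. \<forall>x\<in>c. \<exists>i\<le>length W. x \<otimes> word_prod G (take i W) \<in> H #> g"
  using D
proof (induction D rule: finite_induct)
  case empty then show ?case by (intro bexI[of _ "[]"]) auto
next
  case (insert c D)
  then obtain W where W: "W \<in> lists (set_pmf \<mu>)"
    "\<forall>c\<in>D. \<forall>x\<in>c. \<exists>i\<le>length W. x \<otimes> word_prod G (take i W) \<in> H #> g"
    by auto
  from insert obtain x0 where x0: "x0 \<in> carrier G" "c = H #> x0"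
    unfolding RCOSETS_def by auto
  have Wc: "set W \<subseteq> carrier G" using W(1) by (rule words_closed)
  then have wc: "word_prod G W \<in> carrier G" by simp
  define y where "y = x0 \<otimes> word_prod G W"
  have y: "y \<in> carrier G" using x0 Wc by (simp add: y_def)
  obtain v where v: "v \<in> lists (set_pmf \<mu>)" "word_prod G v = inv y \<otimes> g"
    using exists_word[of "inv y \<otimes> g"] y g by auto
  have vc: "set v \<subseteq> carrier G" using v(1) by (rule words_closed)
  show ?case
  proof (intro bexI[of _ "W @ v"] ballI)
    fix c' x assume c': "c' \<in> insert c D" and x: "x \<in> c'"
    show "\<exists>i\<le>length (W @ v). x \<otimes> word_prod G (take i (W @ v)) \<in> H #> g"
    proof (cases "c' = c")
      case True
      with x x0 obtain h where h: "h \<in> H" "x = h \<otimes> x0" unfolding r_coset_def by auto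
      have hc: "h \<in> carrier G" using h H_subset by auto
      have "x \<otimes> word_prod G (W @ v) = h \<otimes> (y \<otimes> (inv y \<otimes> g))"
        using Wc vc v(2) x0 hc wc g by (simp add: word_prod_append h m_assoc y_def)
      also have "\<dots> = h \<otimes> g" using y g by (simp add: m_assoc[symmetric])
      finally have "x \<otimes> word_prod G (W @ v) \<in> H #> g" using h unfolding r_coset_def by auto
      then show ?thesis by (intro exI[of _ "length (W @ v)"]) auto
    next
      case False
      with c' x W obtain i where "i \<le> length W" "x \<otimes> word_prod G (take i W) \<in> H #> g" by blast
      then show ?thesis by (intro exI[of _ i]) auto
    qed
  qed (use W v in auto)
qed

text \<open>The only use of the finite index of \<open>H\<close>.\<close>
lemma exists_word_through_coset:
  assumes g: "g \<in> carrier G"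
  shows "\<exists>W\<in>lists (set_pmf \<mu>). \<forall>x\<in>carrier G. \<exists>i\<le>length W. x \<otimes> word_prod G (take i W) \<in> H #> g"
proof -
  obtain W where W: "W \<in> lists (set_pmf \<mu>)"
    "\<forall>c\<in>rcosets H. \<forall>x\<in>c. \<exists>i\<le>length W. x \<otimes> word_prod G (take i W) \<in> H #> g"
    using exists_word_through_cosets[OF g finite_index] by auto
  show ?thesis
  proof (intro bexI[OF _ W(1)] ballI)
    fix x assume x: "x \<in> carrier G"
    have "H #> x \<in> rcosets H" using x H_subset by (intro rcosetsI)
    moreover have "x \<in> H #> x" using x subgroup_H by (rule rcos_self)
    ultimately show "\<exists>i\<le>length W. x \<otimes> word_prod G (take i W) \<in> H #> g" using W(2) by blast
  qed
qed

lemma typical_visits_coset: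
  assumes "typical \<omega>" "x \<in> carrier G" "g \<in> carrier G"
  shows "\<exists>k\<ge>t. x \<otimes> rw_pos G k \<omega> \<in> H #> g"
proof -
  obtain W where W: "W \<in> lists (set_pmf \<mu>)"
    "\<forall>x\<in>carrier G. \<exists>i\<le>length W. x \<otimes> word_prod G (take i W) \<in> H #> g"
    using exists_word_through_coset[OF assms(3)] by blast
  obtain p where p: "p \<ge> t" "stake (length W) (sdrop p \<omega>) = W"
    using assms(1) W(1) unfolding word_recurrent_def by blast
  have \<omega>: "\<omega> \<in> streams (carrier G)" using assms(1) by (rule typical_streams_carrier)
  obtain i where i: "i \<le> length W" "(x \<otimes> rw_pos G p \<omega>) \<otimes> word_prod G (take i W) \<in> H #> g"
    using W(2) assms \<omega> by (meson m_closed rw_pos_closed)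
  have "x \<otimes> rw_pos G (p + i) \<omega> = (x \<otimes> rw_pos G p \<omega>) \<otimes> rw_pos G i (sdrop p \<omega>)"
    using \<omega> assms(2) by (simp add: rw_pos_add m_assoc rw_pos_closed sdrop_in_streams)
  moreover have "rw_pos G i (sdrop p \<omega>) = word_prod G (take i W)"
    using p(2) i(1) by (metis rw_pos_eq_word_prod min.absorb1 take_stake)
  ultimately show ?thesis using i p by (intro exI[of _ "p + i"]) auto
qed

section \<open>Hitting times of the subgroup\<close>

lemma mult_in_H_iff:
  assumes "h \<in> H" "x \<in> carrier G" shows "h \<otimes> x \<in> H \<longleftrightarrow> x \<in> H"
proof
  assume "h \<otimes> x \<in> H"
  then have "inv h \<otimes> (h \<otimes> x) \<in> H"
    using assms(1) subgroup.m_closed[OF subgroup_H] subgroup.m_inv_closed[OF subgroup_H] by blast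
  then show "x \<in> H" using assms H_subset by (auto simp: m_assoc[symmetric])
qed (use assms subgroup.m_closed[OF subgroup_H] in blast)

definition hitting_time :: "nat \<Rightarrow> 'a \<Rightarrow> 'a stream \<Rightarrow> nat" where
  "hitting_time j g \<omega> = (LEAST m. j \<le> m \<and> g \<otimes> rw_pos G m \<omega> \<in> H)"

text \<open>Off typical paths a visit to \<open>H\<close> need not exist; \<open>\<one>\<close> is then a junk value.\<close>
definition hitting_point :: "nat \<Rightarrow> 'a \<Rightarrow> 'a stream \<Rightarrow> 'a" where
  "hitting_point j g \<omega> =
     (if typical \<omega> \<and> g \<in> carrier G then g \<otimes> rw_pos G (hitting_time j g \<omega>) \<omega> else \<one>)"

lemma hitting_time:
  assumes "typical \<omega>" "g \<in> carrier G"
  shows "j \<le> hitting_time j g \<omega>" "g \<otimes> rw_pos G (hitting_time j g \<omega>) \<omega> \<in> H"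
    and "\<And>k. j \<le> k \<Longrightarrow> k < hitting_time j g \<omega> \<Longrightarrow> g \<otimes> rw_pos G k \<omega> \<notin> H"
proof -
  obtain m where "m \<ge> j" "g \<otimes> rw_pos G m \<omega> \<in> H #> \<one>"
    using typical_visits_coset[OF assms one_closed] by blast
  then have "j \<le> m \<and> g \<otimes> rw_pos G m \<omega> \<in> H" by (simp add: coset_mult_one[OF H_subset])
  then have "j \<le> hitting_time j g \<omega> \<and> g \<otimes> rw_pos G (hitting_time j g \<omega>) \<omega> \<in> H"
    unfolding hitting_time_def by (rule LeastI)
  then show "j \<le> hitting_time j g \<omega>" "g \<otimes> rw_pos G (hitting_time j g \<omega>) \<omega> \<in> H" by auto
  show "g \<otimes> rw_pos G k \<omega> \<notin> H" if "j \<le> k" "k < hitting_time j g \<omega>" for k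
    using that not_less_Least unfolding hitting_time_def by blast
qed

lemma hitting_time_eq_iff:
  assumes "typical \<omega>" "g \<in> carrier G"
  shows "hitting_time j g \<omega> = m \<longleftrightarrow>
    j \<le> m \<and> g \<otimes> rw_pos G m \<omega> \<in> H \<and> (\<forall>k. j \<le> k \<longrightarrow> k < m \<longrightarrow> g \<otimes> rw_pos G k \<omega> \<notin> H)"
proof
  assume "hitting_time j g \<omega> = m"
  then show "j \<le> m \<and> g \<otimes> rw_pos G m \<omega> \<in> H \<and> (\<forall>k. j \<le> k \<longrightarrow> k < m \<longrightarrow> g \<otimes> rw_pos G k \<omega> \<notin> H)"
    using hitting_time[OF assms, of j] by auto
next
  assume "j \<le> m \<and> g \<otimes> rw_pos G m \<omega> \<in> H \<and> (\<forall>k. j \<le> k \<longrightarrow> k < m \<longrightarrow> g \<otimes> rw_pos G k \<omega> \<notin> H)"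
  then show "hitting_time j g \<omega> = m"
    unfolding hitting_time_def by (intro Least_equality) (auto simp: not_le[symmetric])
qed

lemma hitting_point_in_H: "hitting_point j g \<omega> \<in> H"
  using hitting_time(2) subgroup.one_closed[OF subgroup_H] by (auto simp: hitting_point_def)

lemma hitting_point_0_of_in_H:
  assumes "g \<in> H" "typical \<omega>" shows "hitting_point 0 g \<omega> = g"
proof -
  have g: "g \<in> carrier G" using assms(1) H_subset by auto
  have "hitting_time 0 g \<omega> = 0" using assms g by (subst hitting_time_eq_iff) auto
  then show ?thesis using assms(2) g by (simp add: hitting_point_def)
qed

lemma hitting_point_0_of_notin_H:
  assumes "g \<notin> H" shows "hitting_point 0 g \<omega> = hitting_point 1 g \<omega>"
proof (cases "typical \<omega> \<and> g \<in> carrier G")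
  case True
  have "hitting_time 0 g \<omega> = hitting_time 1 g \<omega>"
  proof (subst hitting_time_eq_iff[OF conjunct1[OF True] conjunct2[OF True]], intro conjI allI impI)
    show "g \<otimes> rw_pos G (hitting_time 1 g \<omega>) \<omega> \<in> H" using True by (auto intro: hitting_time(2))
    fix k assume "k < hitting_time 1 g \<omega>"
    then show "g \<otimes> rw_pos G k \<omega> \<notin> H"
      using True assms hitting_time(3)[of \<omega> g 1 k] by (cases k) auto
  qed (use True in auto)
  then show ?thesis by (simp add: hitting_point_def)
qed (auto simp: hitting_point_def)

lemma hitting_point_1_of_in_H:
  assumes "g \<in> H" "typical \<omega>" shows "hitting_point 1 g \<omega> = g \<otimes> hitting_point 1 \<one> \<omega>"
proof -
  have g: "g \<in> carrier G" using assms(1) H_subset by auto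
  have X: "rw_pos G k \<omega> \<in> carrier G" for k
    using assms(2) by (simp add: rw_pos_closed typical_streams_carrier)
  have "hitting_time 1 g \<omega> = hitting_time 1 \<one> \<omega>"
    using hitting_time[OF assms(2) one_closed, of 1] assms(1) X
    by (subst hitting_time_eq_iff[OF assms(2) g]) (simp add: mult_in_H_iff)
  then show ?thesis using assms(2) g X by (simp add: hitting_point_def)
qed

lemma hitting_point_Stream:
  assumes \<omega>: "typical \<omega>" and s: "s \<in> set_pmf \<mu>" and g: "g \<in> carrier G"
  shows "hitting_point 1 g (s ## \<omega>) = hitting_point 0 (g \<otimes> s) \<omega>"
proof -
  have gs: "g \<otimes> s \<in> carrier G" using g s support_closed by simp
  have X: "g \<otimes> rw_pos G (Suc k) (s ## \<omega>) = (g \<otimes> s) \<otimes> rw_pos G k \<omega>" for k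
    using g s support_closed rw_pos_closed[OF typical_streams_carrier[OF \<omega>]]
    by (simp add: rw_pos_Stream m_assoc)
  have "hitting_time 1 g (s ## \<omega>) = Suc (hitting_time 0 (g \<otimes> s) \<omega>)"
  proof (subst hitting_time_eq_iff[OF word_recurrent_Stream[OF \<omega> s] g], intro conjI allI impI)
    show "g \<otimes> rw_pos G (Suc (hitting_time 0 (g \<otimes> s) \<omega>)) (s ## \<omega>) \<in> H"
      using hitting_time(2)[OF \<omega> gs] by (simp add: X)
    fix k assume "1 \<le> k" "k < Suc (hitting_time 0 (g \<otimes> s) \<omega>)"
    then show "g \<otimes> rw_pos G k (s ## \<omega>) \<notin> H"
      using hitting_time(3)[OF \<omega> gs, of 0 "k - 1"] X[of "k - 1"] by (cases k) auto
  qed simp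
  then show ?thesis
    using \<omega> g gs word_recurrent_Stream[OF \<omega> s] by (simp add: hitting_point_def X)
qed

lemma sets_hitting_time_pred:
  assumes g: "g \<in> carrier G"
  shows "{\<omega>. typical \<omega> \<and> P (hitting_time j g \<omega>) (stake (hitting_time j g \<omega>) \<omega>)} \<in> sets paths"
proof -
  define Q where "Q m v \<longleftrightarrow> j \<le> m \<and> g \<otimes> word_prod G v \<in> H \<and>
      (\<forall>k. j \<le> k \<longrightarrow> k < m \<longrightarrow> g \<otimes> word_prod G (take k v) \<notin> H) \<and> P m v" for m v
  have Q: "hitting_time j g \<omega> = m \<and> P m (stake m \<omega>) \<longleftrightarrow> Q m (stake m \<omega>)" if "typical \<omega>" for \<omega> m
    by (auto simp: hitting_time_eq_iff[OF that g] Q_def rw_pos_eq_word_prod take_stake min_def)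
  have "{\<omega>. typical \<omega> \<and> P (hitting_time j g \<omega>) (stake (hitting_time j g \<omega>) \<omega>)}
      = (\<Union>m. {\<omega>. typical \<omega>} \<inter> (streams (set_pmf \<mu>) \<inter> {\<omega>. Q m (stake m \<omega>)}))"
  proof (intro equalityI subsetI)
    fix \<omega> assume "\<omega> \<in> {\<omega>. typical \<omega> \<and> P (hitting_time j g \<omega>) (stake (hitting_time j g \<omega>) \<omega>)}"
    then show "\<omega> \<in> (\<Union>m. {\<omega>. typical \<omega>} \<inter> (streams (set_pmf \<mu>) \<inter> {\<omega>. Q m (stake m \<omega>)}))"
      using Q[of \<omega> "hitting_time j g \<omega>"] by (auto simp: word_recurrent_def)
  next
    fix \<omega> assume "\<omega> \<in> (\<Union>m. {\<omega>. typical \<omega>} \<inter> (streams (set_pmf \<mu>) \<inter> {\<omega>. Q m (stake m \<omega>)}))"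
    then obtain m where "typical \<omega>" "Q m (stake m \<omega>)" by blast
    then show "\<omega> \<in> {\<omega>. typical \<omega> \<and> P (hitting_time j g \<omega>) (stake (hitting_time j g \<omega>) \<omega>)}"
      using Q[of \<omega> m] by auto
  qed
  also have "\<dots> \<in> sets paths"
    by (intro sets.countable_UN image_subsetI sets.Int sets_word_recurrent sets_stake_pred)
  finally show ?thesis .
qed

lemma sets_not_typical: "{\<omega>. \<not> typical \<omega>} \<in> sets paths"
proof -
  have "{\<omega>. \<not> typical \<omega>} = space paths - {\<omega>. typical \<omega>}" by auto
  then show ?thesis using sets.Diff[OF sets.top sets_word_recurrent] by simp
qed

lemma measurable_hitting_point: "hitting_point j g \<in> measurable paths (count_space UNIV)"
proof (cases "g \<in> carrier G")
  case True
  show ?thesis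
  proof (rule measurableI)
    fix A :: "'a set"
    have "hitting_point j g -` A \<inter> space paths = ({\<omega>. \<not> typical \<omega>} \<inter> {\<omega>. \<one> \<in> A}) \<union>
        {\<omega>. typical \<omega> \<and> (\<lambda>m v. g \<otimes> word_prod G v \<in> A) (hitting_time j g \<omega>) (stake (hitting_time j g \<omega>) \<omega>)}"
      using True by (auto simp: hitting_point_def rw_pos_eq_word_prod split: if_splits)
    also have "\<dots> \<in> sets paths"
      by (intro sets.Un sets.Int sets_not_typical sets_hitting_time_pred True) (cases "\<one> \<in> A"; simp add: UNIV_in_sets_stream_space_pmf)
    finally show "hitting_point j g -` A \<inter> space paths \<in> sets paths" .
  qed auto
next
  case False
  then have "hitting_point j g = (\<lambda>_. \<one>)" by (simp add: hitting_point_def fun_eq_iff)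
  then show ?thesis by simp
qed

section \<open>The random walk induced on the subgroup\<close>

definition return_time :: "'a stream \<Rightarrow> nat" where
  "return_time = hitting_time 1 \<one>"

definition induced_step :: "'a stream \<Rightarrow> 'a" where
  "induced_step = hitting_point 1 \<one>"

lemma return_time:
  assumes "typical \<omega>"
  shows "1 \<le> return_time \<omega>" "rw_pos G (return_time \<omega>) \<omega> \<in> H"
    and "\<And>k. 1 \<le> k \<Longrightarrow> k < return_time \<omega> \<Longrightarrow> rw_pos G k \<omega> \<notin> H"
  using hitting_time[OF assms one_closed, of 1] rw_pos_closed[OF typical_streams_carrier[OF assms]]
  by (auto simp: return_time_def)

lemma induced_step_eq: "typical \<omega> \<Longrightarrow> induced_step \<omega> = rw_pos G (return_time \<omega>) \<omega>"
  by (simp add: induced_step_def return_time_def hitting_point_def rw_pos_closed typical_streams_carrier)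

lemma measurable_induced_step: "induced_step \<in> measurable paths (count_space UNIV)"
  unfolding induced_step_def by (rule measurable_hitting_point)

lemma sets_return_time_eq: "{\<omega>. typical \<omega> \<and> return_time \<omega> = m} \<in> sets paths"
  using sets_hitting_time_pred[OF one_closed, of "\<lambda>r v. r = m" 1] by (simp add: return_time_def)

definition after_return :: "'a stream \<Rightarrow> 'a stream" where
  "after_return \<omega> = (if typical \<omega> then sdrop (return_time \<omega>) \<omega> else \<omega>)"

definition induced_walk :: "'a stream \<Rightarrow> 'a stream" where
  "induced_walk \<omega> = smap induced_step (siterate after_return \<omega>)"

lemma induced_walk_Stream: "induced_walk \<omega> = induced_step \<omega> ## induced_walk (after_return \<omega>)"
  unfolding induced_walk_def by (subst siterate.ctr) simp

lemma typical_after_return: "typical \<omega> \<Longrightarrow> typical (after_return \<omega>)"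
  by (simp add: after_return_def word_recurrent_sdrop)

lemma induced_walk_in_streams: "induced_walk \<omega> \<in> streams H"
  unfolding induced_walk_def induced_step_def streams_iff_snth using hitting_point_in_H by simp

lemma measurable_after_return: "after_return \<in> measurable paths paths"
proof (rule measurableI)
  fix B assume B: "B \<in> sets paths"
  have "after_return -` B \<inter> space paths = ({\<omega>. \<not> typical \<omega>} \<inter> B) \<union>
      (\<Union>m. {\<omega>. typical \<omega> \<and> return_time \<omega> = m} \<inter> {\<omega>. sdrop m \<omega> \<in> B})"
    by (auto simp: after_return_def split: if_splits)
  also have "\<dots> \<in> sets paths"
    using B by (intro sets.Un sets.Int sets_not_typical sets.countable_UN image_subsetI
        sets_return_time_eq sets_sdrop_vimage) auto
  finally show "after_return -` B \<inter> space paths \<in> sets paths" .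
qed auto

lemma measurable_induced_walk:
  assumes "sets N = sets (count_space UNIV)"
  shows "induced_walk \<in> measurable paths (stream_space N)"
proof (rule measurable_stream_space2)
  fix n
  have "(\<lambda>\<omega>. induced_walk \<omega> !! n) = induced_step \<circ> (after_return ^^ n)"
    by (auto simp: induced_walk_def fun_eq_iff)
  moreover have "(after_return ^^ n) \<in> measurable paths paths"
    by (induction n) (auto intro: measurable_compose[OF _ measurable_after_return])
  then have "induced_step \<circ> (after_return ^^ n) \<in> measurable paths (count_space UNIV)"
    by (rule measurable_comp[OF _ measurable_induced_step])
  ultimately show "(\<lambda>\<omega>. induced_walk \<omega> !! n) \<in> measurable paths N"
    by (subst measurable_cong_sets[OF refl assms]) simp
qed

definition excursions :: "'a list set" where
  "excursions = {w \<in> lists (set_pmf \<mu>). w \<noteq> [] \<and> word_prod G w \<in> H \<and>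
     (\<forall>k. 1 \<le> k \<longrightarrow> k < length w \<longrightarrow> word_prod G (take k w) \<notin> H)}"

lemma stake_return_time_in_excursions: "typical \<omega> \<Longrightarrow> stake (return_time \<omega>) \<omega> \<in> excursions"
  using return_time[of \<omega>]
  by (auto simp: excursions_def word_recurrent_def stake_in_lists take_stake min_def rw_pos_eq_word_prod
      Suc_le_eq)

lemma return_time_eq_length:
  assumes "typical \<omega>" "w \<in> excursions" "stake (length w) \<omega> = w"
  shows "return_time \<omega> = length w"
proof -
  have "rw_pos G k \<omega> = word_prod G (take k w)" if "k \<le> length w" for k
    using assms(3) that by (metis rw_pos_eq_word_prod min.absorb1 take_stake)
  moreover have "rw_pos G k \<omega> \<in> carrier G" for k
    using assms(1) by (simp add: rw_pos_closed typical_streams_carrier)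
  moreover have "word_prod G (take k w) \<in> carrier G" for k
    using assms(2) words_closed[of w] set_take_subset[of k w] by (auto simp: excursions_def)
  moreover have "word_prod G w \<in> carrier G"
    using assms(2) words_closed[of w] by (auto simp: excursions_def)
  ultimately show ?thesis
    using assms(2) unfolding return_time_def
    by (subst hitting_time_eq_iff[OF assms(1) one_closed]) (auto simp: excursions_def Suc_le_eq)
qed

lemma excursion_prefix_unique:
  assumes "typical \<omega>" "w \<in> excursions" "w' \<in> excursions"
    and "stake (length w) \<omega> = w" "stake (length w') \<omega> = w'"
  shows "w = w'"
  using return_time_eq_length[OF assms(1,2,4)] return_time_eq_length[OF assms(1,3,5)] assms(4,5) by simp

lemma induced_step_after_return_iff:
  assumes "typical \<omega>"
  shows "induced_step \<omega> = x \<and> after_return \<omega> \<in> B \<longleftrightarrow>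
    (\<exists>w\<in>excursions. word_prod G w = x \<and> stake (length w) \<omega> = w \<and> sdrop (length w) \<omega> \<in> B)"
proof
  assume "induced_step \<omega> = x \<and> after_return \<omega> \<in> B"
  then show "\<exists>w\<in>excursions. word_prod G w = x \<and> stake (length w) \<omega> = w \<and> sdrop (length w) \<omega> \<in> B"
    using assms stake_return_time_in_excursions[OF assms]
    by (intro bexI[of _ "stake (return_time \<omega>) \<omega>"])
      (auto simp: induced_step_eq after_return_def rw_pos_eq_word_prod)
next
  assume "\<exists>w\<in>excursions. word_prod G w = x \<and> stake (length w) \<omega> = w \<and> sdrop (length w) \<omega> \<in> B"
  then obtain w where "w \<in> excursions" "word_prod G w = x" "stake (length w) \<omega> = w" "sdrop (length w) \<omega> \<in> B"
    by blast
  then show "induced_step \<omega> = x \<and> after_return \<omega> \<in> B"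
    using assms return_time_eq_length[OF assms]
    by (auto simp: induced_step_eq after_return_def rw_pos_eq_word_prod)
qed

lemma AE_typical: "AE \<omega> in paths. typical \<omega>"
  by (rule AE_word_recurrent)

definition excursion_weight :: "'a \<Rightarrow> ennreal" where
  "excursion_weight x =
     (\<integral>\<^sup>+w. ennreal (prod_list (map (pmf \<mu>) w)) \<partial>count_space {w \<in> excursions. word_prod G w = x})"

text \<open>The strong Markov property at the return time.\<close>
lemma emeasure_typical_induced_step_after_return:
  assumes B: "B \<in> sets paths"
  shows "emeasure paths {\<omega>. typical \<omega> \<and> induced_step \<omega> = x \<and> after_return \<omega> \<in> B}
       = excursion_weight x * emeasure paths B"
proof -
  let ?W = "{w \<in> excursions. word_prod G w = x}"
  let ?A = "\<lambda>w. {\<omega>. typical \<omega>} \<inter> {\<omega>. stake (length w) \<omega> = w \<and> sdrop (length w) \<omega> \<in> B}"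
  have "{\<omega>. typical \<omega> \<and> induced_step \<omega> = x \<and> after_return \<omega> \<in> B} = (\<Union>w\<in>?W. ?A w)"
  proof (intro equalityI subsetI)
    fix \<omega> assume "\<omega> \<in> {\<omega>. typical \<omega> \<and> induced_step \<omega> = x \<and> after_return \<omega> \<in> B}"
    then show "\<omega> \<in> (\<Union>w\<in>?W. ?A w)" using induced_step_after_return_iff[of \<omega> x B] by auto
  next
    fix \<omega> assume "\<omega> \<in> (\<Union>w\<in>?W. ?A w)"
    then show "\<omega> \<in> {\<omega>. typical \<omega> \<and> induced_step \<omega> = x \<and> after_return \<omega> \<in> B}"
      using induced_step_after_return_iff[of \<omega> x B] by auto
  qed
  also have "emeasure paths \<dots> = (\<integral>\<^sup>+w. emeasure paths (?A w) \<partial>count_space ?W)"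
  proof (rule emeasure_UN_countable)
    have "?W \<subseteq> lists (set_pmf \<mu>)" by (auto simp: excursions_def)
    then show "countable ?W" by (rule countable_subset) (intro countable_lists countable_set_pmf)
    show "?A w \<in> sets paths" for w by (intro sets.Int sets_word_recurrent sets_stake_sdrop B)
    show "disjoint_family_on ?A ?W"
      unfolding disjoint_family_on_def using excursion_prefix_unique by blast
  qed
  also have "\<dots> = (\<integral>\<^sup>+w. ennreal (prod_list (map (pmf \<mu>) w)) * emeasure paths B \<partial>count_space ?W)"
  proof (intro nn_integral_cong)
    fix w
    have "emeasure paths (?A w) = emeasure paths {\<omega>. stake (length w) \<omega> = w \<and> sdrop (length w) \<omega> \<in> B}"
      by (rule emeasure_eq_AE) (use AE_typical sets_word_recurrent sets_stake_sdrop[OF B] in auto)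
    then show "emeasure paths (?A w) = ennreal (prod_list (map (pmf \<mu>) w)) * emeasure paths B"
      by (simp add: emeasure_stake_sdrop[OF B])
  qed
  also have "\<dots> = excursion_weight x * emeasure paths B"
    unfolding excursion_weight_def by (rule nn_integral_multc) simp
  finally show ?thesis .
qed

lemma sets_induced_step_after_return:
  "B \<in> sets paths \<Longrightarrow> {\<omega>. induced_step \<omega> = x \<and> after_return \<omega> \<in> B} \<in> sets paths"
proof -
  assume B: "B \<in> sets paths"
  have "{\<omega>. induced_step \<omega> = x \<and> after_return \<omega> \<in> B}
      = (induced_step -` {x} \<inter> space paths) \<inter> (after_return -` B \<inter> space paths)" by auto
  also have "\<dots> \<in> sets paths"
    using measurable_sets[OF measurable_induced_step, of "{x}"] measurable_sets[OF measurable_after_return B]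
    by auto
  finally show ?thesis .
qed

lemma emeasure_induced_step_after_return_weight:
  assumes B: "B \<in> sets paths"
  shows "emeasure paths {\<omega>. induced_step \<omega> = x \<and> after_return \<omega> \<in> B} = excursion_weight x * emeasure paths B"
proof -
  have "emeasure paths {\<omega>. induced_step \<omega> = x \<and> after_return \<omega> \<in> B}
      = emeasure paths {\<omega>. typical \<omega> \<and> induced_step \<omega> = x \<and> after_return \<omega> \<in> B}"
  proof (rule emeasure_eq_AE)
    show "AE \<omega> in paths. \<omega> \<in> {\<omega>. induced_step \<omega> = x \<and> after_return \<omega> \<in> B} \<longleftrightarrow>
        \<omega> \<in> {\<omega>. typical \<omega> \<and> induced_step \<omega> = x \<and> after_return \<omega> \<in> B}"
      using AE_typical by eventually_elim auto
    show "{\<omega>. typical \<omega> \<and> induced_step \<omega> = x \<and> after_return \<omega> \<in> B} \<in> sets paths"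
      using sets.Int[OF sets_word_recurrent sets_induced_step_after_return[OF B]]
      by (simp add: Int_def)
  qed (rule sets_induced_step_after_return[OF B])
  then show ?thesis by (simp add: emeasure_typical_induced_step_after_return[OF B])
qed

definition induced_pmf :: "'a pmf" where
  "induced_pmf = Abs_pmf (distr paths (count_space UNIV) induced_step)"

lemma measure_pmf_induced_pmf: "measure_pmf induced_pmf = distr paths (count_space UNIV) induced_step"
proof -
  let ?D = "distr paths (count_space UNIV) induced_step"
  interpret D: prob_space ?D
    using prob_space_stream_space_pmf by (rule prob_space.prob_space_distr[OF _ measurable_induced_step])
  have emeasure_D: "emeasure ?D A = emeasure paths {\<omega>. induced_step \<omega> \<in> A}" for A
    by (subst emeasure_distr[OF measurable_induced_step]) (auto simp: vimage_def)
  define Z where "Z = {x \<in> H. measure ?D {x} = 0}"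
  have "countable Z"
    using countable_subset[OF H_subset countable_carrier] by (rule countable_subset[rotated]) (auto simp: Z_def)
  then have "emeasure ?D Z = (\<integral>\<^sup>+x. emeasure ?D {x} \<partial>count_space Z)"
    by (intro emeasure_countable_singleton) auto
  also have "\<dots> = 0" by (auto simp: Z_def D.emeasure_eq_measure intro!: nn_integral_zero')
  finally have "- H \<union> Z \<in> null_sets ?D"
    using emeasure_D[of "- H"] by (auto simp: induced_step_def hitting_point_in_H intro!: null_sets.Un)
  then have "AE x in ?D. measure ?D {x} \<noteq> 0" by (rule AE_I') (auto simp: Z_def)
  then show ?thesis
    unfolding induced_pmf_def using D.prob_space_axioms by (intro Abs_pmf_inverse) auto
qed

lemma emeasure_induced_step_eq: "ennreal (pmf induced_pmf x) = emeasure paths {\<omega>. induced_step \<omega> = x}"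
  using measure_pmf.emeasure_eq_measure[of induced_pmf "{x}"]
  by (simp add: pmf.rep_eq measure_pmf_induced_pmf emeasure_distr[OF measurable_induced_step] vimage_def)

lemma pmf_induced_pmf: "ennreal (pmf induced_pmf x) = excursion_weight x"
  using emeasure_induced_step_after_return_weight[OF UNIV_in_sets_stream_space_pmf, of x]
    prob_space.emeasure_space_1[OF prob_space_stream_space_pmf[of \<mu>]]
  by (simp add: emeasure_induced_step_eq)

lemma emeasure_induced_step_after_return:
  "B \<in> sets paths \<Longrightarrow>
    emeasure paths {\<omega>. induced_step \<omega> = x \<and> after_return \<omega> \<in> B} = pmf induced_pmf x * emeasure paths B"
  by (simp add: emeasure_induced_step_after_return_weight pmf_induced_pmf)

lemma set_pmf_induced_pmf: "set_pmf induced_pmf \<subseteq> H"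
proof
  fix x assume "x \<in> set_pmf induced_pmf"
  then have "ennreal (pmf induced_pmf x) \<noteq> 0" by (simp add: set_pmf_iff pmf_nonneg)
  then have "emeasure paths {\<omega>. induced_step \<omega> = x} \<noteq> 0" by (simp add: emeasure_induced_step_eq)
  then obtain \<omega> where "induced_step \<omega> = x" by fastforce
  then show "x \<in> H" by (auto simp: induced_step_def hitting_point_in_H)
qed

abbreviation induced_paths :: "'a stream measure" where
  "induced_paths \<equiv> stream_space (measure_pmf induced_pmf)"

lemma emeasure_induced_walk_sstart:
  "xs \<in> lists H \<Longrightarrow> emeasure paths {\<omega>. induced_walk \<omega> \<in> sstart H xs} = emeasure induced_paths (sstart H xs)"
proof (induction xs)
  case Nil
  have "AE \<eta> in induced_paths. \<eta> \<in> streams H"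
    using AE_streams_set_pmf[of induced_pmf] set_pmf_induced_pmf by (auto elim: AE_mp intro: streams_mono)
  then have "emeasure induced_paths (sstart H []) = 1"
    using prob_space.emeasure_eq_1_AE[OF prob_space_stream_space_pmf] sets_sstart[of H "[]"]
    by (simp add: sets_stream_space_pmf)
  then show ?case
    using induced_walk_in_streams prob_space.emeasure_space_1[OF prob_space_stream_space_pmf[of \<mu>]] by simp
next
  case (Cons x xs)
  have xs: "sstart H xs \<in> sets induced_paths" using sets_sstart by (simp add: sets_stream_space_pmf)
  define B where "B = {\<omega>. induced_walk \<omega> \<in> sstart H xs}"
  have B: "B \<in> sets paths"
    using measurable_sets[OF measurable_induced_walk xs] by (simp add: B_def vimage_def)
  have "{\<omega>. induced_walk \<omega> \<in> sstart H (x # xs)} = {\<omega>. induced_step \<omega> = x \<and> after_return \<omega> \<in> B}"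
    by (subst induced_walk_Stream) (simp add: B_def)
  then have "emeasure paths {\<omega>. induced_walk \<omega> \<in> sstart H (x # xs)} = pmf induced_pmf x * emeasure paths B"
    by (simp only: emeasure_induced_step_after_return[OF B])
  also have "\<dots> = pmf induced_pmf x * emeasure induced_paths (sstart H xs)"
    using Cons by (simp add: B_def)
  also have "\<dots> = emeasure induced_paths (sstart H (x # xs))"
  proof -
    have "{\<eta>. stake (length [x]) \<eta> = [x] \<and> sdrop (length [x]) \<eta> \<in> sstart H xs} = sstart H (x # xs)"
      using Cons.prems by (auto simp: stream_eq_Stream_iff)
    then show ?thesis using emeasure_stake_sdrop[OF xs, of "[x]"] by simp
  qed
  finally show ?case .
qed

lemma distr_induced_walk: "distr paths induced_paths induced_walk = induced_paths"
proof (rule stream_space_eq_sstart)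
  have walk: "induced_walk \<in> measurable paths induced_paths" by (rule measurable_induced_walk) simp
  show "countable H" using countable_subset[OF H_subset countable_carrier] .
  show "prob_space (distr paths induced_paths induced_walk)"
    by (rule prob_space.prob_space_distr[OF prob_space_stream_space_pmf walk])
  show "prob_space induced_paths" by (rule prob_space_stream_space_pmf)
  show "AE x in distr paths induced_paths induced_walk. x \<in> streams H"
    using induced_walk_in_streams streams_sets[of H "measure_pmf induced_pmf"]
    by (subst AE_distr_iff[OF walk]) (auto simp: sets_stream_space_pmf)
  show "AE x in induced_paths. x \<in> streams H"
    using AE_streams_set_pmf[of induced_pmf] set_pmf_induced_pmf by (auto elim: AE_mp intro: streams_mono)
  show "sets (distr paths induced_paths induced_walk) = sets (stream_space (count_space UNIV))"
    by (simp add: sets_stream_space_pmf)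
  show "sets induced_paths = sets (stream_space (count_space UNIV))" by (rule sets_stream_space_pmf)
  fix xs :: "'a list" assume "xs \<noteq> []" "xs \<in> lists H"
  then show "emeasure (distr paths induced_paths induced_walk) (sstart H xs) = emeasure induced_paths (sstart H xs)"
    using sets_sstart[of H xs]
    by (subst emeasure_distr[OF walk]) (auto simp: sets_stream_space_pmf vimage_def emeasure_induced_walk_sstart)
qed

lemma induced_walk_positions: "typical \<omega> \<Longrightarrow> \<exists>t\<ge>m. rw_pos G t \<omega> = rw_pos G m (induced_walk \<omega>)"
proof (induction m arbitrary: \<omega>)
  case (Suc m)
  obtain t where t: "t \<ge> m" "rw_pos G t (after_return \<omega>) = rw_pos G m (induced_walk (after_return \<omega>))"
    using Suc.IH[OF typical_after_return[OF Suc.prems]] by blast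
  have "rw_pos G (return_time \<omega> + t) \<omega> = rw_pos G (return_time \<omega>) \<omega> \<otimes> rw_pos G t (after_return \<omega>)"
    using Suc.prems by (simp add: rw_pos_add typical_streams_carrier after_return_def)
  also have "\<dots> = rw_pos G (Suc m) (induced_walk \<omega>)"
    by (subst induced_walk_Stream) (simp add: rw_pos_Stream t(2) induced_step_eq Suc.prems)
  finally show ?case using t(1) return_time(1)[OF Suc.prems] by (intro exI[of _ "return_time \<omega> + t"]) auto
qed (auto intro: exI[of _ 0])

lemma tail_semigroup_eq_carrier:
  assumes \<omega>: "typical \<omega>" and induced: "tail_semigroup G n (induced_walk \<omega>) = H"
  shows "tail_semigroup G n \<omega> = carrier G"
proof
  have X: "rw_pos G k \<omega> \<in> carrier G" for k using \<omega> by (simp add: rw_pos_closed typical_streams_carrier)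
  show "tail_semigroup G n \<omega> \<subseteq> carrier G"
    unfolding tail_semigroup_def using X by (intro gen_semigroup_closed) auto
  have "{rw_pos G m (induced_walk \<omega>) |m. n \<le> m} \<subseteq> {rw_pos G m \<omega> |m. n \<le> m}"
  proof
    fix y assume "y \<in> {rw_pos G m (induced_walk \<omega>) |m. n \<le> m}"
    then obtain m where m: "n \<le> m" "y = rw_pos G m (induced_walk \<omega>)" by blast
    then obtain t where "t \<ge> m" "rw_pos G t \<omega> = y" using induced_walk_positions[OF \<omega>, of m] by auto
    then show "y \<in> {rw_pos G m \<omega> |m. n \<le> m}" using m(1) by (intro CollectI exI[of _ t]) auto
  qed
  then have H_tail: "H \<subseteq> tail_semigroup G n \<omega>"
    using gen_semigroup_mono induced unfolding tail_semigroup_def by blast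
  show "carrier G \<subseteq> tail_semigroup G n \<omega>"
  proof
    fix g assume g: "g \<in> carrier G"
    obtain k h where k: "k \<ge> n" "h \<in> H" "rw_pos G k \<omega> = h \<otimes> g"
      using typical_visits_coset[OF \<omega> one_closed g, of n] X unfolding r_coset_def by auto
    have h: "h \<in> carrier G" using k(2) H_subset by auto
    have "g = inv h \<otimes> rw_pos G k \<omega>" using k(3) h g by (simp add: m_assoc[symmetric])
    moreover have "inv h \<in> tail_semigroup G n \<omega>"
      using H_tail k(2) subgroup.m_inv_closed[OF subgroup_H] by auto
    moreover have "rw_pos G k \<omega> \<in> tail_semigroup G n \<omega>"
      unfolding tail_semigroup_def using k(1) by (auto intro: gen_semigroup.gs_incl)
    ultimately show "g \<in> tail_semigroup G n \<omega>"
      unfolding tail_semigroup_def by (auto intro: gen_semigroup.gs_mult)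
  qed
qed

lemma alg_recurrent_of_induced:
  assumes "alg_recurrent (G\<lparr>carrier := H\<rparr>) induced_pmf"
  shows "alg_recurrent G \<mu>"
  unfolding alg_recurrent_def
proof
  fix n
  have "AE \<eta> in distr paths induced_paths induced_walk. tail_semigroup G n \<eta> = H"
    using assms unfolding distr_induced_walk alg_recurrent_def by (simp add: tail_semigroup_carrier_update)
  then have "AE \<omega> in paths. tail_semigroup G n (induced_walk \<omega>) = H"
    by (rule AE_distrD[OF measurable_induced_walk, rotated]) simp
  then show "AE \<omega> in paths. tail_semigroup G n \<omega> = carrier G"
    using AE_typical by eventually_elim (rule tail_semigroup_eq_carrier)
qed

section \<open>Symmetry and non-degeneracy of the induced step law\<close>

definition inv_word :: "'a list \<Rightarrow> 'a list" where
  "inv_word w = rev (map (\<lambda>x. inv x) w)"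

lemma word_prod_inv_word: "set w \<subseteq> carrier G \<Longrightarrow> word_prod G (inv_word w) = inv (word_prod G w)"
  by (simp add: inv_word_def word_prod_rev_inv)

lemma inv_word_inv_word: "set w \<subseteq> carrier G \<Longrightarrow> inv_word (inv_word w) = w"
proof -
  assume "set w \<subseteq> carrier G"
  then have "map (\<lambda>x. inv x) (map (\<lambda>x. inv x) w) = w" by (induction w) auto
  then show ?thesis by (simp add: inv_word_def rev_map)
qed

lemma inv_word_in_lists: "w \<in> lists (set_pmf \<mu>) \<Longrightarrow> inv_word w \<in> lists (set_pmf \<mu>)"
  by (auto simp: inv_word_def inv_in_support)

text \<open>A proper prefix of the reversed inverse excursion is the inverse of a proper suffix of the
  excursion; if it returned to \<open>H\<close>, so would the complementary proper prefix of the excursion.\<close>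
lemma inv_word_excursions:
  assumes w: "w \<in> excursions" shows "inv_word w \<in> excursions"
proof -
  have w_lists: "w \<in> lists (set_pmf \<mu>)" and "w \<noteq> []" and w_H: "word_prod G w \<in> H"
    and first: "\<And>k. 1 \<le> k \<Longrightarrow> k < length w \<Longrightarrow> word_prod G (take k w) \<notin> H"
    using w by (auto simp: excursions_def)
  have wc: "set w \<subseteq> carrier G" using w_lists by (rule words_closed)
  have "word_prod G (take k (inv_word w)) \<notin> H" if k: "1 \<le> k" "k < length w" for k
  proof
    assume "word_prod G (take k (inv_word w)) \<in> H"
    moreover have "take k (inv_word w) = inv_word (drop (length w - k) w)"
      by (simp add: inv_word_def take_rev drop_map)
    moreover have dc: "set (drop (length w - k) w) \<subseteq> carrier G"
      using wc set_drop_subset by (rule subset_trans[rotated])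
    ultimately have "inv (word_prod G (drop (length w - k) w)) \<in> H"
      by (simp add: word_prod_inv_word)
    then have "inv (inv (word_prod G (drop (length w - k) w))) \<in> H"
      by (rule subgroup.m_inv_closed[OF subgroup_H])
    then have "word_prod G (drop (length w - k) w) \<in> H" using dc by simp
    then have "word_prod G w \<otimes> inv (word_prod G (drop (length w - k) w)) \<in> H"
      using w_H subgroup.m_closed[OF subgroup_H] subgroup.m_inv_closed[OF subgroup_H] by blast
    moreover have "word_prod G w \<otimes> inv (word_prod G (drop (length w - k) w)) = word_prod G (take (length w - k) w)"
      using word_prod_take_drop[OF wc, of "length w - k"] dc set_take_subset[of "length w - k" w] wc
      by (simp add: m_assoc)
    ultimately show False using first[of "length w - k"] k by simp
  qed
  moreover have "inv_word w \<noteq> []" "length (inv_word w) = length w"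
    using \<open>w \<noteq> []\<close> by (simp_all add: inv_word_def)
  moreover have "word_prod G (inv_word w) \<in> H"
    using w_H wc by (simp add: word_prod_inv_word subgroup.m_inv_closed[OF subgroup_H])
  ultimately show ?thesis
    using inv_word_in_lists[OF w_lists] by (simp add: excursions_def)
qed

lemma prod_list_pmf_inv_word:
  assumes "w \<in> lists (set_pmf \<mu>)"
  shows "prod_list (map (pmf \<mu>) (inv_word w)) = prod_list (map (pmf \<mu>) w)"
proof -
  have inv_eq: "map (\<lambda>x. pmf \<mu> (inv x)) w = map (pmf \<mu>) w"
  proof (rule map_cong)
    fix x assume "x \<in> set w"
    then have "x \<in> carrier G" using assms support_closed by auto
    then show "pmf \<mu> (inv x) = pmf \<mu> x" by (rule symmetric[symmetric])
  qed simp
  have "map (pmf \<mu>) (inv_word w) = rev (map (\<lambda>x. pmf \<mu> (inv x)) w)"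
    by (simp add: inv_word_def rev_map comp_def)
  then show ?thesis by (simp only: prod_list.rev inv_eq)
qed

lemma excursion_weight_inv: assumes g: "g \<in> H" shows "excursion_weight (inv g) = excursion_weight g"
proof -
  have wc: "set w \<subseteq> carrier G" if "w \<in> excursions" for w
    using that words_closed by (auto simp: excursions_def)
  have "bij_betw inv_word {w \<in> excursions. word_prod G w = g} {w \<in> excursions. word_prod G w = inv g}"
    by (rule bij_betwI[where g = inv_word])
      (use inv_word_excursions word_prod_inv_word wc inv_word_inv_word g H_subset in auto)
  then have "excursion_weight (inv g)
      = (\<integral>\<^sup>+w. ennreal (prod_list (map (pmf \<mu>) (inv_word w))) \<partial>count_space {w \<in> excursions. word_prod G w = g})"
    unfolding excursion_weight_def by (rule nn_integral_bij_count_space[symmetric])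
  also have "\<dots> = excursion_weight g"
    unfolding excursion_weight_def by (intro nn_integral_cong) (auto simp: prod_list_pmf_inv_word excursions_def)
  finally show ?thesis .
qed

lemma symmetric_induced_pmf: "symmetric_measure (G\<lparr>carrier := H\<rparr>) induced_pmf"
  unfolding symmetric_measure_def
proof
  fix g assume "g \<in> carrier (G\<lparr>carrier := H\<rparr>)"
  then have g: "g \<in> H" by simp
  then have "pmf induced_pmf g = pmf induced_pmf (inv g)"
    using excursion_weight_inv[OF g] pmf_induced_pmf[of g] pmf_induced_pmf[of "inv g"]
    by (intro ennreal_inj[THEN iffD1, OF pmf_nonneg pmf_nonneg]) simp
  then show "pmf induced_pmf g = pmf induced_pmf (inv\<^bsub>G\<lparr>carrier := H\<rparr>\<^esub> g)"
    using g subgroup_H by (simp add: m_inv_consistent)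
qed

lemma word_prod_excursion_in_support: "w \<in> excursions \<Longrightarrow> word_prod G w \<in> set_pmf induced_pmf"
proof -
  assume w: "w \<in> excursions"
  then have "0 < ennreal (prod_list (map (pmf \<mu>) w))"
    using prod_list_pmf_pos[of w \<mu>] by (simp add: excursions_def)
  also have "\<dots> \<le> excursion_weight (word_prod G w)"
    unfolding excursion_weight_def using w by (intro nn_integral_ge_point) simp
  finally show ?thesis by (simp add: pmf_induced_pmf[symmetric] set_pmf_iff)
qed

lemma word_prod_in_generate_excursions:
  "v \<in> lists (set_pmf \<mu>) \<Longrightarrow> word_prod G v \<in> H \<Longrightarrow>
    word_prod G v \<in> generate (G\<lparr>carrier := H\<rparr>) (word_prod G ` excursions)"
proof (induction "length v" arbitrary: v rule: less_induct)
  case less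
  show ?case
  proof (cases "v = []")
    case True then show ?thesis using generate.one[of "G\<lparr>carrier := H\<rparr>"] by simp
  next
    case False
    have vc: "set v \<subseteq> carrier G" using less.prems(1) by (rule words_closed)
    define k where "k = (LEAST k. 1 \<le> k \<and> word_prod G (take k v) \<in> H)"
    have ex: "1 \<le> length v \<and> word_prod G (take (length v) v) \<in> H"
      using False less.prems by (simp add: Suc_le_eq)
    have k: "1 \<le> k" "word_prod G (take k v) \<in> H"
      using LeastI[of "\<lambda>k. 1 \<le> k \<and> word_prod G (take k v) \<in> H", OF ex] by (simp_all add: k_def)
    have "k \<le> length v" unfolding k_def by (rule Least_le[of "\<lambda>k. 1 \<le> k \<and> word_prod G (take k v) \<in> H", OF ex])
    moreover have "word_prod G (take j v) \<notin> H" if "1 \<le> j" "j < k" for j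
      using that not_less_Least unfolding k_def by blast
    ultimately have "take k v \<in> excursions"
      using k less.prems(1) False by (auto simp: excursions_def min_def dest: in_set_takeD)
    then have first: "word_prod G (take k v) \<in> generate (G\<lparr>carrier := H\<rparr>) (word_prod G ` excursions)"
      by (auto intro: generate.incl)
    have split: "word_prod G v = word_prod G (take k v) \<otimes> word_prod G (drop k v)"
      by (rule word_prod_take_drop[OF vc])
    moreover have "word_prod G (drop k v) \<in> carrier G"
      using set_drop_subset vc by (intro word_prod_closed) (rule order_trans)
    moreover have "word_prod G (take k v) \<in> carrier G"
      using set_take_subset vc by (intro word_prod_closed) (rule order_trans)
    ultimately have "word_prod G (drop k v) = inv (word_prod G (take k v)) \<otimes> word_prod G v"
      by (simp add: m_assoc[symmetric])
    then have "word_prod G (drop k v) \<in> H"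
      using k(2) less.prems(2) subgroup.m_closed[OF subgroup_H] subgroup.m_inv_closed[OF subgroup_H] by simp
    then have rest: "word_prod G (drop k v) \<in> generate (G\<lparr>carrier := H\<rparr>) (word_prod G ` excursions)"
      using less.hyps[of "drop k v"] k(1) False less.prems(1) set_drop_subset[of k v] by (simp add: lists_eq_set)
    show ?thesis
      using generate.eng[OF first rest] split by simp
  qed
qed

lemma non_degenerate_induced_pmf: "non_degenerate (G\<lparr>carrier := H\<rparr>) induced_pmf"
  unfolding non_degenerate_def
proof
  interpret GH: group "G\<lparr>carrier := H\<rparr>" by (rule subgroup_imp_group[OF subgroup_H])
  show "generate (G\<lparr>carrier := H\<rparr>) (set_pmf induced_pmf) \<subseteq> carrier (G\<lparr>carrier := H\<rparr>)"
    using GH.generate_in_carrier set_pmf_induced_pmf by auto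
  show "carrier (G\<lparr>carrier := H\<rparr>) \<subseteq> generate (G\<lparr>carrier := H\<rparr>) (set_pmf induced_pmf)"
  proof
    fix h assume "h \<in> carrier (G\<lparr>carrier := H\<rparr>)"
    then have h: "h \<in> H" by simp
    obtain v where "v \<in> lists (set_pmf \<mu>)" "word_prod G v = h" using exists_word[of h] h H_subset by auto
    then have "h \<in> generate (G\<lparr>carrier := H\<rparr>) (word_prod G ` excursions)"
      using word_prod_in_generate_excursions h by blast
    also have "\<dots> \<subseteq> generate (G\<lparr>carrier := H\<rparr>) (set_pmf induced_pmf)"
      by (rule GH.mono_generate) (use word_prod_excursion_in_support in auto)
    finally show "h \<in> generate (G\<lparr>carrier := H\<rparr>) (set_pmf induced_pmf)" .
  qed
qed

section \<open>Harmonic extension and the Liouville property\<close>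

definition harmonic_extension :: "('a \<Rightarrow> real) \<Rightarrow> 'a \<Rightarrow> real" where
  "harmonic_extension f g = (\<integral>\<omega>. f (hitting_point 0 g \<omega>) \<partial>paths)"

lemma measurable_comp_hitting_point: "(\<lambda>\<omega>. f (hitting_point j g \<omega>)) \<in> borel_measurable paths"
  by (rule measurable_compose[OF measurable_hitting_point]) simp

lemma integrable_hitting_point:
  fixes f :: "'a \<Rightarrow> real"
  assumes "\<And>h. h \<in> H \<Longrightarrow> \<bar>f h\<bar> \<le> B"
  shows "integrable paths (\<lambda>\<omega>. f (hitting_point j g \<omega>))"
proof -
  interpret P: prob_space paths by (rule prob_space_stream_space_pmf)
  show ?thesis
    using assms hitting_point_in_H measurable_comp_hitting_point
    by (intro P.integrable_const_bound[where B=B]) auto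
qed

lemma abs_harmonic_extension_le:
  fixes f :: "'a \<Rightarrow> real"
  assumes "\<And>h. h \<in> H \<Longrightarrow> \<bar>f h\<bar> \<le> B"
  shows "\<bar>harmonic_extension f g\<bar> \<le> B"
proof -
  interpret P: prob_space paths by (rule prob_space_stream_space_pmf)
  have "\<bar>harmonic_extension f g\<bar> \<le> (\<integral>\<omega>. \<bar>f (hitting_point 0 g \<omega>)\<bar> \<partial>paths)"
    unfolding harmonic_extension_def by (rule integral_abs_bound)
  also have "\<dots> \<le> (\<integral>\<omega>. B \<partial>paths)"
    using assms hitting_point_in_H integrable_abs[OF integrable_hitting_point[of f, OF assms]]
    by (intro integral_mono) auto
  finally show ?thesis by simp
qed

lemma harmonic_extension_on_H: "g \<in> H \<Longrightarrow> harmonic_extension f g = f g"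
proof -
  assume g: "g \<in> H"
  have "harmonic_extension f g = (\<integral>\<omega>. f g \<partial>paths)"
    unfolding harmonic_extension_def
    by (rule integral_cong_AE[OF measurable_comp_hitting_point])
      (use AE_typical hitting_point_0_of_in_H[OF g] in auto)
  then show ?thesis by simp
qed

lemma harmonic_extension_eq_first_return:
  assumes f: "harmonic (G\<lparr>carrier := H\<rparr>) induced_pmf f" and g: "g \<in> carrier G"
  shows "harmonic_extension f g = (\<integral>\<omega>. f (hitting_point 1 g \<omega>) \<partial>paths)"
proof (cases "g \<in> H")
  case True
  have "harmonic_extension f g = (\<integral>h. f (g \<otimes> h) \<partial>measure_pmf induced_pmf)"
    using f True by (simp add: harmonic_extension_on_H harmonic_def)
  also have "\<dots> = (\<integral>\<omega>. f (g \<otimes> induced_step \<omega>) \<partial>paths)"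
    by (simp add: measure_pmf_induced_pmf integral_distr[OF measurable_induced_step])
  also have "\<dots> = (\<integral>\<omega>. f (hitting_point 1 g \<omega>) \<partial>paths)"
  proof (rule integral_cong_AE[OF _ measurable_comp_hitting_point])
    show "(\<lambda>\<omega>. f (g \<otimes> induced_step \<omega>)) \<in> borel_measurable paths"
      by (rule measurable_compose[OF measurable_induced_step]) simp
    show "AE \<omega> in paths. f (g \<otimes> induced_step \<omega>) = f (hitting_point 1 g \<omega>)"
      using AE_typical
    proof eventually_elim
      case (elim \<omega>)
      then show ?case using hitting_point_1_of_in_H[OF True elim] by (simp add: induced_step_def)
    qed
  qed
  finally show ?thesis .
next
  case False
  then show ?thesis by (simp add: harmonic_extension_def hitting_point_0_of_notin_H)
qed

lemma integral_hitting_point_1_eq: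
  assumes bounded: "\<And>h. h \<in> H \<Longrightarrow> \<bar>f h\<bar> \<le> B" and g: "g \<in> carrier G"
  shows "(\<integral>\<omega>. f (hitting_point 1 g \<omega>) \<partial>paths) = (\<integral>s. harmonic_extension f (g \<otimes> s) \<partial>\<mu>)"
proof -
  have "(\<integral>\<omega>. f (hitting_point 1 g \<omega>) \<partial>paths) = (\<integral>s. (\<integral>\<omega>. f (hitting_point 1 g (s ## \<omega>)) \<partial>paths) \<partial>\<mu>)"
    by (rule prob_space.integral_stream_space[OF prob_space_measure_pmf integrable_hitting_point[OF bounded]])
  also have "\<dots> = (\<integral>s. harmonic_extension f (g \<otimes> s) \<partial>\<mu>)"
  proof (rule integral_cong_AE)
    show "AE s in \<mu>. (\<integral>\<omega>. f (hitting_point 1 g (s ## \<omega>)) \<partial>paths) = harmonic_extension f (g \<otimes> s)"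
      unfolding AE_measure_pmf_iff harmonic_extension_def
    proof
      fix s assume s: "s \<in> set_pmf \<mu>"
      show "(\<integral>\<omega>. f (hitting_point 1 g (s ## \<omega>)) \<partial>paths) = (\<integral>\<omega>. f (hitting_point 0 (g \<otimes> s) \<omega>) \<partial>paths)"
      proof (rule integral_cong_AE[OF _ measurable_comp_hitting_point])
        show "(\<lambda>\<omega>. f (hitting_point 1 g (s ## \<omega>))) \<in> borel_measurable paths"
          by (rule measurable_compose[OF _ measurable_comp_hitting_point]) simp
        show "AE \<omega> in paths. f (hitting_point 1 g (s ## \<omega>)) = f (hitting_point 0 (g \<otimes> s) \<omega>)"
          using AE_typical
        proof eventually_elim
          case (elim \<omega>)
          then show ?case using hitting_point_Stream[OF elim s g] by simp
        qed
      qed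
    qed
  qed simp_all
  finally show ?thesis .
qed

lemma harmonic_harmonic_extension:
  assumes f: "harmonic (G\<lparr>carrier := H\<rparr>) induced_pmf f" and bounded: "\<And>h. h \<in> H \<Longrightarrow> \<bar>f h\<bar> \<le> B"
  shows "harmonic G \<mu> (harmonic_extension f)"
  unfolding harmonic_def
proof (intro ballI conjI)
  fix g assume g: "g \<in> carrier G"
  show "integrable \<mu> (\<lambda>h. harmonic_extension f (g \<otimes> h))"
    by (rule measure_pmf.integrable_const_bound[where B=B])
      (use abs_harmonic_extension_le[of f, OF bounded] in auto)
  show "harmonic_extension f g = (\<integral>h. harmonic_extension f (g \<otimes> h) \<partial>\<mu>)"
    using harmonic_extension_eq_first_return[OF f g] integral_hitting_point_1_eq[of f, OF bounded g] by simp
qed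

lemma liouville_induced_pmf:
  assumes "liouville G \<mu>" shows "liouville (G\<lparr>carrier := H\<rparr>) induced_pmf"
  unfolding liouville_def
proof (intro allI impI)
  fix f assume "harmonic (G\<lparr>carrier := H\<rparr>) induced_pmf f \<and> (\<exists>B. \<forall>h\<in>carrier (G\<lparr>carrier := H\<rparr>). \<bar>f h\<bar> \<le> B)"
  then obtain B where f: "harmonic (G\<lparr>carrier := H\<rparr>) induced_pmf f" and bounded: "\<And>h. h \<in> H \<Longrightarrow> \<bar>f h\<bar> \<le> B"
    by auto
  note bounded_extension = abs_harmonic_extension_le[of f, OF bounded]
  have "harmonic G \<mu> (harmonic_extension f)"
    using f bounded by (rule harmonic_harmonic_extension)
  moreover have "\<exists>B. \<forall>g\<in>carrier G. \<bar>harmonic_extension f g\<bar> \<le> B"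
    using bounded_extension by blast
  ultimately have "harmonic G \<mu> (harmonic_extension f) \<and> (\<exists>B. \<forall>g\<in>carrier G. \<bar>harmonic_extension f g\<bar> \<le> B)" ..
  from assms[unfolded liouville_def, rule_format, OF this]
  have const: "harmonic_extension f g = harmonic_extension f h" if "g \<in> carrier G" "h \<in> carrier G" for g h
    using that .
  have H_const: "f g = f h" if g: "g \<in> H" and h: "h \<in> H" for g h
  proof -
    have "f g = harmonic_extension f g" by (rule harmonic_extension_on_H[OF g, symmetric])
    also have "\<dots> = harmonic_extension f h" using g h H_subset by (intro const) auto
    also have "\<dots> = f h" by (rule harmonic_extension_on_H[OF h])
    finally show ?thesis .
  qed
  show "\<forall>g\<in>carrier (G\<lparr>carrier := H\<rparr>). \<forall>h\<in>carrier (G\<lparr>carrier := H\<rparr>). f g = f h"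
  proof (intro ballI)
    fix g h assume "g \<in> carrier (G\<lparr>carrier := H\<rparr>)" "h \<in> carrier (G\<lparr>carrier := H\<rparr>)"
    then show "f g = f h" by (intro H_const) simp_all
  qed
qed

end

lemma induced_random_walk:
  assumes "group G" "countable (carrier G)" "subgroup H G" "finite (rcosets\<^bsub>G\<^esub> H)"
    and "measure_on G \<mu>" "symmetric_measure G \<mu>" "non_degenerate G \<mu>"
  obtains \<nu> where "measure_on (G\<lparr>carrier := H\<rparr>) \<nu>" "symmetric_measure (G\<lparr>carrier := H\<rparr>) \<nu>"
    "non_degenerate (G\<lparr>carrier := H\<rparr>) \<nu>" "liouville G \<mu> \<Longrightarrow> liouville (G\<lparr>carrier := H\<rparr>) \<nu>"
    "alg_recurrent (G\<lparr>carrier := H\<rparr>) \<nu> \<Longrightarrow> alg_recurrent G \<mu>"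
proof -
  have symmetric: "\<And>g. g \<in> carrier G \<Longrightarrow> pmf \<mu> g = pmf \<mu> (inv\<^bsub>G\<^esub> g)"
    using assms(6) unfolding symmetric_measure_def by blast
  interpret finite_index_random_walk G H \<mu>
    by (intro finite_index_random_walk.intro finite_index_random_walk_axioms.intro assms(1-4) symmetric)
      (use assms(5,7) in \<open>simp_all add: measure_on_def non_degenerate_def\<close>)
  have "measure_on (G\<lparr>carrier := H\<rparr>) induced_pmf"
    using set_pmf_induced_pmf by (simp add: measure_on_def)
  then show ?thesis
    using symmetric_induced_pmf non_degenerate_induced_pmf liouville_induced_pmf alg_recurrent_of_induced
    by (rule that)
qed

theorem mainTheorem10:
  fixes G :: "('a, 'b) monoid_scheme" and H :: "'a set"
  assumes "group G" and "countable (carrier G)"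
    and "subgroup H G" and "finite (rcosets\<^bsub>G\<^esub> H)"
  shows "(AR_group (G\<lparr>carrier := H\<rparr>) \<longrightarrow> AR_group G)
       \<and> (liouville_AR_group (G\<lparr>carrier := H\<rparr>) \<longrightarrow> liouville_AR_group G)"
proof (intro conjI impI)
  assume AR: "AR_group (G\<lparr>carrier := H\<rparr>)"
  show "AR_group G" unfolding AR_group_def
  proof (intro allI impI)
    fix \<mu> assume "measure_on G \<mu> \<and> symmetric_measure G \<mu> \<and> non_degenerate G \<mu>"
    then obtain \<nu> where "measure_on (G\<lparr>carrier := H\<rparr>) \<nu>" "symmetric_measure (G\<lparr>carrier := H\<rparr>) \<nu>"
        "non_degenerate (G\<lparr>carrier := H\<rparr>) \<nu>" "alg_recurrent (G\<lparr>carrier := H\<rparr>) \<nu> \<Longrightarrow> alg_recurrent G \<mu>"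
      using induced_random_walk[OF assms] by blast
    with AR show "alg_recurrent G \<mu>" unfolding AR_group_def by blast
  qed
next
  assume AR: "liouville_AR_group (G\<lparr>carrier := H\<rparr>)"
  show "liouville_AR_group G" unfolding liouville_AR_group_def
  proof (intro allI impI)
    fix \<mu> assume \<mu>: "measure_on G \<mu> \<and> symmetric_measure G \<mu> \<and> non_degenerate G \<mu> \<and> liouville G \<mu>"
    then obtain \<nu> where "measure_on (G\<lparr>carrier := H\<rparr>) \<nu>" "symmetric_measure (G\<lparr>carrier := H\<rparr>) \<nu>"
        "non_degenerate (G\<lparr>carrier := H\<rparr>) \<nu>" "liouville (G\<lparr>carrier := H\<rparr>) \<nu>"
        "alg_recurrent (G\<lparr>carrier := H\<rparr>) \<nu> \<Longrightarrow> alg_recurrent G \<mu>"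
      using induced_random_walk[OF assms] by blast
    with AR show "alg_recurrent G \<mu>" unfolding liouville_AR_group_def by blast
  qed
qed

end
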